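(* Let $x\in\{0,1\}^\infty$ satisfy $\sigma^n(x)=x$ for some $n\ge1$, and let $X=\{\sigma^j(x):0\le j<n\}$ be its orbit. Then the hereditary closure $\tilde X$ of $X$ is a transitive sofic shift and \[\tilde X=\{y\in\{0,1\}^\infty: y\le\sigma^j(x)\text{ for some }0\le j<n\}.\] If moreover $\sigma(x)\ne x$, then $\tilde X$ is not topologically mixing.
   Context: On $\{0,1\}^\infty=\{0,1\}^{\mathbb N_0}$, $y\le x$ means $y_i\le x_i$ for all $i$. The hereditary closure of a shift space $X$ is $\tilde X=\{y\in\{0,1\}^\infty:\exists x\in X,\ y\le x\}$. A sofic shift is the set of label sequences of infinite paths in a finite edge-labelled directed graph. Transitive: for all words $u,w$ in the language there is $v$ with $uvw$ in the language; topologically mixing: for all $u,w$ there is $N$ such that for every $m\ge N$ some $v$ with $|v|=m$ has $uvw$ in the language. *)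

theory Defs
  imports Main
begin

text \<open>Points of {0,1}^N_0 are modelled as nat \<Rightarrow> bool (False = 0, True = 1).
  The pointwise order on functions gives y \<le> x iff y i \<le> x i for all i.\<close>

definition shift :: "(nat \<Rightarrow> bool) \<Rightarrow> (nat \<Rightarrow> bool)" where
  "shift x = (\<lambda>i. x (Suc i))"

definition hclosure :: "(nat \<Rightarrow> bool) set \<Rightarrow> (nat \<Rightarrow> bool) set" where
  "hclosure X = {y. \<exists>x\<in>X. \<forall>i. y i \<le> x i}"

definition language :: "(nat \<Rightarrow> bool) set \<Rightarrow> bool list set" where
  "language X = {w. \<exists>x\<in>X. \<exists>k. w = map x [k..<k + length w]}"

text \<open>Sofic: label sequences of infinite paths in a finite edge-labelled digraph
  (vertices taken from nat, edges (source, label, target)).\<close>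
definition sofic :: "(nat \<Rightarrow> bool) set \<Rightarrow> bool" where
  "sofic X \<longleftrightarrow> (\<exists>E :: (nat \<times> bool \<times> nat) set. finite E \<and>
      X = {y. \<exists>p :: nat \<Rightarrow> nat. \<forall>i. (p i, y i, p (Suc i)) \<in> E})"

definition transitive_shift :: "(nat \<Rightarrow> bool) set \<Rightarrow> bool" where
  "transitive_shift X \<longleftrightarrow> (\<forall>u\<in>language X. \<forall>w\<in>language X.
      \<exists>v. u @ v @ w \<in> language X)"

definition mixing_shift :: "(nat \<Rightarrow> bool) set \<Rightarrow> bool" where
  "mixing_shift X \<longleftrightarrow> (\<forall>u\<in>language X. \<forall>w\<in>language X.
      \<exists>N. \<forall>m\<ge>N. \<exists>v. length v = m \<and> u @ v @ w \<in> language X)"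

end

theory Submission
  imports Defs
begin

text \<open>Let x have period n. A word occurs in the hereditary closure of the orbit of x iff it is
  dominated by some window of x; padding with zeros and moving the second window by a multiple of n
  gives transitivity, and the cyclic graph on the n phases of x, with the label 1 allowed only
  where x is 1, presents the closure. If the closure were mixing, one full period u of x could be
  followed by u again after gaps of two consecutive lengths m. Each occurrence says that x is
  dominated by a shift of itself, and for a periodic point the chain
  x \<le> shift^k x \<le> shift^(2k) x \<le> \<dots> \<le> shift^(nk) x = x forces equality. So x would have
  the periods n + m and n + m + 1, hence period 1.\<close>

lemma funpow_shift_apply: "(shift ^^ j) x i = x (i + j)"
  by (induction j arbitrary: i) (auto simp: shift_def)

definition dominated_at :: "(nat \<Rightarrow> bool) \<Rightarrow> nat \<Rightarrow> bool list \<Rightarrow> bool" where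
  "dominated_at x k w \<longleftrightarrow> (\<forall>t<length w. w ! t \<longrightarrow> x (k + t))"

lemma language_hclosure:
  "language (hclosure X) = {w. \<exists>x\<in>X. \<exists>k. dominated_at x k w}"
proof (intro set_eqI iffI)
  fix w assume "w \<in> language (hclosure X)"
  then obtain x y k where x: "x \<in> X" and yx: "\<forall>i. y i \<le> x i"
    and w: "w = map y [k..<k + length w]"
    unfolding language_def hclosure_def by blast
  have "dominated_at x k w"
    unfolding dominated_at_def
  proof (intro allI impI)
    fix t assume "t < length w" "w ! t"
    then have "y (k + t)" using w by (metis add_diff_cancel_left' length_map length_upt nth_map_upt)
    then show "x (k + t)" using yx le_boolD by blast
  qed
  with x show "w \<in> {w. \<exists>x\<in>X. \<exists>k. dominated_at x k w}" by blast
next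
  fix w assume "w \<in> {w. \<exists>x\<in>X. \<exists>k. dominated_at x k w}"
  then obtain x k where x: "x \<in> X" and dom: "dominated_at x k w" by blast
  define y where "y i \<longleftrightarrow> k \<le> i \<and> i < k + length w \<and> w ! (i - k)" for i
  have "\<forall>i. y i \<le> x i"
    using dom unfolding dominated_at_def y_def
    by (metis add_diff_inverse_nat le_boolI less_diff_conv2 not_le add.commute)
  with x have "y \<in> hclosure X" unfolding hclosure_def by blast
  moreover have "w = map y [k..<k + length w]"
    by (rule nth_equalityI) (auto simp: y_def)
  ultimately show "w \<in> language (hclosure X)" unfolding language_def by blast
qed

lemma dominated_at_append_zeros:
  assumes "dominated_at x k u" "dominated_at x l w" "k + length u \<le> l"
  shows "dominated_at x k (u @ replicate (l - k - length u) False @ w)"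
  unfolding dominated_at_def
proof (intro allI impI)
  fix t assume t: "t < length (u @ replicate (l - k - length u) False @ w)"
    and bit: "(u @ replicate (l - k - length u) False @ w) ! t"
  consider "t < length u" | "length u \<le> t" "t < l - k" | "l - k \<le> t" by linarith
  then show "x (k + t)"
  proof cases
    case 1 then show ?thesis using assms(1) bit by (simp add: dominated_at_def nth_append)
  next
    case 2 then show ?thesis using bit by (simp add: nth_append split: if_splits)
  next
    case 3
    with t assms(3) have "t - (l - k) < length w" "w ! (t - (l - k))"
      using bit by (auto simp: nth_append split: if_splits)
    then have "x (l + (t - (l - k)))" using assms(2) by (simp add: dominated_at_def)
    then show ?thesis using 3 assms(3) by (simp add: add.commute)
  qed
qed

lemma period_one_if_consecutive_periods:
  assumes "\<And>i. x (i + a) = x i" "\<And>i. x (i + Suc a) = x i"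
  shows "shift x = x"
proof
  fix i
  have "x (Suc i) = x (Suc i + a)" using assms(1) by metis
  also have "\<dots> = x (i + Suc a)" by simp
  also have "\<dots> = x i" by (rule assms(2))
  finally show "shift x i = x i" by (simp add: shift_def)
qed

locale periodic_seq =
  fixes x :: "nat \<Rightarrow> bool" and n :: nat
  assumes period_pos: "0 < n" and periodic: "\<And>i. x (i + n) = x i"
begin

abbreviation orbit :: "(nat \<Rightarrow> bool) set" where
  "orbit \<equiv> {(shift ^^ j) x | j. j < n}"

lemma periodic_add_mult: "x (i + m * n) = x i"
proof (induction m)
  case (Suc m)
  have "x (i + Suc m * n) = x (i + m * n + n)" by (simp add: algebra_simps)
  also have "\<dots> = x (i + m * n)" by (rule periodic)
  finally show ?case using Suc by simp
qed simp

lemma periodic_mod: "x (i mod n) = x i"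
  using periodic_add_mult[of "i mod n" "i div n"] by simp

lemma dominated_at_add_mult:
  "dominated_at x k w \<Longrightarrow> dominated_at x (k + m * n) w"
  using periodic_add_mult[of "k + _" m] by (simp add: dominated_at_def ac_simps)

lemma language_orbit_hclosure:
  "language (hclosure orbit) = {w. \<exists>k. dominated_at x k w}"
proof -
  have "dominated_at ((shift ^^ j) x) k w = dominated_at x (k + j) w" for j k w
    by (simp add: dominated_at_def funpow_shift_apply algebra_simps)
  moreover have "x \<in> orbit" using period_pos by (auto intro: exI[of _ 0])
  ultimately show ?thesis
    unfolding language_hclosure by (auto simp del: funpow.simps)
qed

lemma period_if_le_shift:
  assumes "\<forall>t<n. x t \<longrightarrow> x (k + t)"
  shows "x (i + k) = x i"
proof -
  have le: "x t \<longrightarrow> x (t + k)" for t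
  proof
    assume "x t"
    then have "x (k + t mod n)"
      using assms period_pos periodic_mod[of t] by simp
    then show "x (t + k)"
      using periodic_mod[of "k + t mod n"] periodic_mod[of "k + t"]
      by (simp add: mod_add_right_eq add.commute)
  qed
  have iterate: "x t \<longrightarrow> x (t + m * k)" for m t
  proof (induction m)
    case (Suc m)
    then show ?case using le[of "t + m * k"] by (simp add: ac_simps)
  qed simp
  have "i + k + (n - 1) * k = i + k * n"
    using period_pos by (cases n) (auto simp: algebra_simps)
  then have "x (i + k) \<longrightarrow> x i"
    using iterate[of "i + k" "n - 1"] periodic_add_mult[of i k] by (metis mult.commute)
  then show ?thesis using le[of i] by blast
qed

lemma period_if_dominates_own_period:
  assumes "dominated_at x k (map x [0..<n])"
  shows "x (i + k) = x i"
  using assms by (intro period_if_le_shift) (simp add: dominated_at_def)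

lemma transitive_orbit_hclosure: "transitive_shift (hclosure orbit)"
  unfolding transitive_shift_def language_orbit_hclosure
proof (intro ballI)
  fix u w assume "u \<in> {w. \<exists>k. dominated_at x k w}" "w \<in> {w. \<exists>k. dominated_at x k w}"
  then obtain k l where u: "dominated_at x k u" and w: "dominated_at x l w" by blast
  define l' where "l' = l + (k + length u) * n"
  have "k + length u \<le> l'"
    using period_pos by (simp add: l'_def trans_le_add2)
  moreover have "dominated_at x l' w" using w by (simp add: l'_def dominated_at_add_mult)
  ultimately show "\<exists>v. u @ v @ w \<in> {w. \<exists>k. dominated_at x k w}"
    using u by (blast dest: dominated_at_append_zeros)
qed

lemma not_mixing_orbit_hclosure:
  assumes "shift x \<noteq> x"
  shows "\<not> mixing_shift (hclosure orbit)"
proof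
  assume "mixing_shift (hclosure orbit)"
  define u where "u = map x [0..<n]"
  have "dominated_at x 0 u" by (simp add: dominated_at_def u_def)
  then obtain N where N: "\<And>m. m \<ge> N \<Longrightarrow> \<exists>v k. length v = m \<and> dominated_at x k (u @ v @ u)"
    using \<open>mixing_shift (hclosure orbit)\<close>
    unfolding mixing_shift_def language_orbit_hclosure by blast
  have gap_period: "x (i + (n + m)) = x i" if gap: "m \<ge> N" for m i
  proof -
    obtain v k where v: "length v = m" and dom: "dominated_at x k (u @ v @ u)"
      using N[OF gap] by blast
    have "dominated_at x k u" "dominated_at x (k + (n + m)) u"
      using dom v by (auto simp: dominated_at_def u_def nth_append algebra_simps
          dest: spec[of _ "n + m + _"] spec[of _ "_ :: nat"])
    then have "x (i + (n + m) + k) = x (i + (n + m))" "x (i + (k + (n + m))) = x i"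
      unfolding u_def by (simp_all only: period_if_dominates_own_period)
    then show ?thesis by (simp add: ac_simps)
  qed
  have "shift x = x"
    by (rule period_one_if_consecutive_periods[of _ "n + N"])
      (use gap_period[of N] gap_period[of "Suc N"] in simp_all)
  with assms show False by contradiction
qed

definition phase_graph :: "(nat \<times> bool \<times> nat) set" where
  "phase_graph = {(k, b, Suc k mod n) | k b. k < n \<and> (b \<longrightarrow> x k)}"

lemma finite_phase_graph: "finite phase_graph"
proof (rule finite_subset)
  show "phase_graph \<subseteq> {0..<n} \<times> UNIV \<times> {0..<n}"
    using period_pos by (auto simp: phase_graph_def)
qed auto

lemma phase_graph_path:
  assumes "\<forall>i. (p i, y i, p (Suc i)) \<in> phase_graph"
  shows "p 0 < n" "y i \<longrightarrow> x (i + p 0)"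
proof -
  have edge: "p i < n \<and> p (Suc i) = Suc (p i) mod n \<and> (y i \<longrightarrow> x (p i))" for i
    using assms by (auto simp: phase_graph_def)
  have phase: "p i = (p 0 + i) mod n" for i
  proof (induction i)
    case 0 then show ?case using edge[of 0] by simp
  next
    case (Suc i) then show ?case using edge[of i] by (simp add: mod_Suc_eq)
  qed
  show "p 0 < n" using edge[of 0] by simp
  show "y i \<longrightarrow> x (i + p 0)"
    using edge[of i] phase[of i] periodic_mod[of "p 0 + i"] by (simp add: add.commute)
qed

lemma sofic_orbit_hclosure: "sofic (hclosure orbit)"
  unfolding sofic_def
proof (intro exI conjI)
  show "hclosure orbit = {y. \<exists>p. \<forall>i. (p i, y i, p (Suc i)) \<in> phase_graph}"
  proof (intro set_eqI iffI)
    fix y assume "y \<in> hclosure orbit"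
    then obtain j where "j < n" and y: "\<forall>i. y i \<le> x (i + j)"
      by (auto simp: hclosure_def funpow_shift_apply)
    have "((j + i) mod n, y i, (j + Suc i) mod n) \<in> phase_graph" for i
      using y[rule_format, of i] periodic_mod[of "j + i"] period_pos
      by (auto simp: phase_graph_def mod_Suc_eq add.commute le_bool_def)
    then show "y \<in> {y. \<exists>p. \<forall>i. (p i, y i, p (Suc i)) \<in> phase_graph}"
      by (intro CollectI exI[of _ "\<lambda>i. (j + i) mod n"]) simp
  next
    fix y assume "y \<in> {y. \<exists>p. \<forall>i. (p i, y i, p (Suc i)) \<in> phase_graph}"
    then obtain p where "\<forall>i. (p i, y i, p (Suc i)) \<in> phase_graph" by blast
    from phase_graph_path[OF this] show "y \<in> hclosure orbit"
      unfolding hclosure_def by (auto simp: funpow_shift_apply le_bool_def)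
  qed
qed (rule finite_phase_graph)

end

lemma periodic_seq_if_funpow_shift_fixed:
  assumes "n \<ge> 1" "(shift ^^ n) x = x"
  shows "periodic_seq x n"
proof
  show "x (i + n) = x i" for i
    using fun_cong[OF assms(2), of i] by (simp add: funpow_shift_apply)
qed (use assms(1) in simp)

theorem mainTheorem16:
  fixes x :: "nat \<Rightarrow> bool" and n :: nat
  assumes "n \<ge> 1" and "(shift ^^ n) x = x"
  shows "sofic (hclosure {(shift ^^ j) x | j. j < n})
    \<and> transitive_shift (hclosure {(shift ^^ j) x | j. j < n})
    \<and> hclosure {(shift ^^ j) x | j. j < n} = {y. \<exists>j<n. \<forall>i. y i \<le> (shift ^^ j) x i}
    \<and> (shift x \<noteq> x \<longrightarrow> \<not> mixing_shift (hclosure {(shift ^^ j) x | j. j < n}))"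
proof -
  interpret periodic_seq x n
    by (rule periodic_seq_if_funpow_shift_fixed[OF assms])
  have "hclosure orbit = {y. \<exists>j<n. \<forall>i. y i \<le> (shift ^^ j) x i}"
    unfolding hclosure_def by blast
  then show ?thesis
    using sofic_orbit_hclosure transitive_orbit_hclosure not_mixing_orbit_hclosure by blast
qed

end
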